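(* Let $A\in\mathbb{R}^{m\times n}$ have no zero row, with rows $a_1^T,\dots,a_m^T$, let ${\bf u}=(\mu_1,\dots,\mu_m)\in\mathbb{R}^m$, let $P_k(\mu_k)=I-\mu_k a_ka_k^T/\|a_k\|_2^2$, $Q_i({\bf u}_i)=P_m(\mu_m)\cdots P_{i+1}(\mu_{i+1})$ for $1\le i\le m-1$ and $Q_m({\bf u}_m)=I$. Let $h_{k,l}=a_k^Ta_l/\|a_l\|_2^2$. For $1\le i<j\le m$ define $$d_{i,j}({\bf u}_i)=\sum_{v=2}^{j-i+1}(-1)^{v-1}\sum_{i=t_1<t_2<\dots<t_v=j}\ \prod_{s=1}^{v-1}\mu_{t_{s+1}}\prod_{s=1}^{v-1}h_{t_s,t_{s+1}},$$ where the inner sum is over all strictly increasing integer sequences $t_1<\dots<t_v$ with $t_1=i$, $t_v=j$. Then for every $1\le i\le m$ and every $\tilde x\in N(A)^\perp$, $$a_i^T[Q_i({\bf u}_i)]^T\tilde x=\big(1,d_{i,i+1}({\bf u}_i),\dots,d_{i,m}({\bf u}_i)\big)\big(a_i^T,a_{i+1}^T,\dots,a_m^T\big)^T\tilde x,$$ and the compatible vector of $Q_i({\bf u}_i)a_i$ on $A$ is $(0,\dots,0,1,d_{i,i+1}({\bf u}_i),\dots,d_{i,m}({\bf u}_i))$ (with the $1$ in position $i$), i.e. $Q_i({\bf u}_i)a_i=a_i+\sum_{j=i+1}^m d_{i,j}({\bf u}_i)a_j$.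
   Context: ${\bf u}_i=(\mu_{i+1},\dots,\mu_m)$. $N(A)^\perp$ is the orthogonal complement of the null space of $A$. *)

theory Defs
  imports "HOL-Analysis.Analysis"
begin

text \<open>Rows a_1,...,a_m of A are given as a :: nat => real^'n (only indices 1..m matter);
  mu :: nat => real gives mu_1,...,mu_m.\<close>

definition Pmat :: "(nat \<Rightarrow> real^'n) \<Rightarrow> (nat \<Rightarrow> real) \<Rightarrow> nat \<Rightarrow> real^'n^'n" where
  "Pmat a mu k = mat 1 - (\<chi> r c. mu k * (a k $ r) * (a k $ c) / (norm (a k))\<^sup>2)"

text \<open>Q_i = P_m ** P_(m-1) ** ... ** P_(i+1); Q_m = I.\<close>
definition Qmat :: "(nat \<Rightarrow> real^'n) \<Rightarrow> (nat \<Rightarrow> real) \<Rightarrow> nat \<Rightarrow> nat \<Rightarrow> real^'n^'n" where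
  "Qmat a mu m i = foldl (\<lambda>M k. M ** Pmat a mu k) (mat 1) (rev [i+1..<m+1])"

definition hcoef :: "(nat \<Rightarrow> real^'n) \<Rightarrow> nat \<Rightarrow> nat \<Rightarrow> real" where
  "hcoef a k l = (a k \<bullet> a l) / (norm (a l))\<^sup>2"

definition incseqs :: "nat \<Rightarrow> nat \<Rightarrow> nat \<Rightarrow> nat list set" where
  "incseqs v i j = {ts. length ts = v \<and> sorted_wrt (<) ts \<and> ts ! 0 = i \<and> ts ! (v - 1) = j}"

definition dcoef :: "(nat \<Rightarrow> real^'n) \<Rightarrow> (nat \<Rightarrow> real) \<Rightarrow> nat \<Rightarrow> nat \<Rightarrow> real" where
  "dcoef a mu i j = (\<Sum>v = 2..j - i + 1. (-1) ^ (v - 1) *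
      (\<Sum>ts \<in> incseqs v i j.
         (\<Prod>s<v-1. mu (ts ! (s+1))) * (\<Prod>s<v-1. hcoef a (ts ! s) (ts ! (s+1)))))"

definition nullspace_rows :: "(nat \<Rightarrow> real^'n) \<Rightarrow> nat \<Rightarrow> (real^'n) set" where
  "nullspace_rows a m = {z. \<forall>k\<in>{1..m}. a k \<bullet> z = 0}"

definition orth_compl :: "(real^'n) set \<Rightarrow> (real^'n) set" where
  "orth_compl S = {x. \<forall>z\<in>S. z \<bullet> x = 0}"

end

theory Submission
  imports Defs
begin

text \<open>
  Since \<open>Q\<^sub>i\<close> for \<open>m + 1\<close> rows is \<open>P\<^sub>m\<^sub>+\<^sub>1 Q\<^sub>i\<close> for \<open>m\<close> rows, the second identity is proved by
  induction on \<open>m\<close>. Applying \<open>P\<^sub>k\<close> to \<open>w = a\<^sub>i + \<Sum>\<^sub>i\<^sub><\<^sub>l\<^sub><\<^sub>k d\<^sub>i\<^sub>,\<^sub>l a\<^sub>l\<close> subtracts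
  \<open>\<mu>\<^sub>k (a\<^sub>k\<^sup>T w / \<parallel>a\<^sub>k\<parallel>\<^sup>2) a\<^sub>k\<close>, so the step amounts to the recursion
  \<open>d\<^sub>i\<^sub>,\<^sub>k = -\<mu>\<^sub>k (h\<^sub>i\<^sub>,\<^sub>k + \<Sum>\<^sub>i\<^sub><\<^sub>l\<^sub><\<^sub>k d\<^sub>i\<^sub>,\<^sub>l h\<^sub>l\<^sub>,\<^sub>k)\<close>. The path sum defining \<open>d\<^sub>i\<^sub>,\<^sub>k\<close> satisfies it:
  paths with two nodes give the first term, longer paths split at their second-to-last node
  \<open>l\<close> into a path from \<open>i\<close> to \<open>l\<close> followed by the step \<open>l \<rightarrow> k\<close>, which flips the sign.
  The first identity is the second one transposed, \<open>a\<^sub>i\<^sup>T Q\<^sup>T x = (Q a\<^sub>i)\<^sup>T x\<close>; it holds for every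
  \<open>x\<close>, not only on \<open>N(A)\<^sup>\<bottom>\<close>.
\<close>

lemma inner_transpose_mult: "(u::real^'n) \<bullet> (transpose Q *v x) = (Q *v u) \<bullet> x"
  by (metis dot_lmul_matrix inner_commute transpose_matrix_vector)

lemma Pmat_mult_vector:
  "Pmat a mu k *v w = w - (mu k * (a k \<bullet> w) / (norm (a k))\<^sup>2) *\<^sub>R a k"
proof -
  have "(\<chi> r c. mu k * (a k $ r) * (a k $ c) / (norm (a k))\<^sup>2) *v w
      = (mu k * (a k \<bullet> w) / (norm (a k))\<^sup>2) *\<^sub>R a k"
    by (simp add: vec_eq_iff matrix_vector_mult_def inner_vec_def sum_distrib_left
        sum_divide_distrib mult_ac)
  then show ?thesis
    by (simp add: Pmat_def matrix_vector_mult_diff_rdistrib)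
qed

lemma foldl_matrix_mul:
  fixes N :: "'a::semiring_1^'n^'n"
  shows "foldl (\<lambda>M k. M ** f k) N xs = N ** foldl (\<lambda>M k. M ** f k) (mat 1) xs"
proof (induction xs arbitrary: N)
  case Nil
  then show ?case by simp
next
  case (Cons x xs)
  show ?case
    using Cons[of "N ** f x"] Cons[of "f x"] by (simp add: matrix_mul_assoc)
qed

lemma Qmat_self [simp]: "Qmat a mu m m = mat 1"
  by (simp add: Qmat_def)

lemma Qmat_Suc:
  assumes "i \<le> m"
  shows "Qmat a mu (Suc m) i = Pmat a mu (Suc m) ** Qmat a mu m i"
proof -
  have "rev [i+1..<Suc m+1] = Suc m # rev [i+1..<m+1]"
    using assms by simp
  then show ?thesis
    unfolding Qmat_def by (simp add: foldl_matrix_mul[where N = "Pmat a mu (Suc m)"] del: upt_Suc)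
qed

lemma incseqs_subset_atLeastAtMost: "ts \<in> incseqs v i j \<Longrightarrow> set ts \<subseteq> {i..j}"
proof
  fix x assume ts: "ts \<in> incseqs v i j" and "x \<in> set ts"
  then obtain k where k: "k < v" "x = ts ! k"
    by (auto simp: incseqs_def in_set_conv_nth)
  have "sorted ts" "length ts = v"
    using ts by (auto simp: incseqs_def strict_sorted_imp_sorted)
  then have "ts ! 0 \<le> ts ! k" "ts ! k \<le> ts ! (v - 1)"
    using k by (auto intro!: sorted_nth_mono)
  then show "x \<in> {i..j}"
    using ts k by (simp add: incseqs_def)
qed

lemma finite_incseqs: "finite (incseqs v i j)"
proof (rule finite_subset)
  show "incseqs v i j \<subseteq> {ts. set ts \<subseteq> {..j} \<and> length ts = v}"
    using incseqs_subset_atLeastAtMost by (fastforce simp: incseqs_def)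
qed (rule finite_lists_length_eq, simp)

lemma incseqs_eq_empty: "j - i + 1 < v \<Longrightarrow> incseqs v i j = {}"
proof (rule ccontr)
  assume long: "j - i + 1 < v" and "incseqs v i j \<noteq> {}"
  then obtain ts where ts: "ts \<in> incseqs v i j" by blast
  then have "v = card (set ts)"
    by (simp add: incseqs_def strict_sorted_iff distinct_card)
  also have "\<dots> \<le> card {i..j}"
    using ts by (intro card_mono incseqs_subset_atLeastAtMost) auto
  finally show False
    using long by simp
qed

lemma incseqs_two: "i < j \<Longrightarrow> incseqs 2 i j = {[i, j]}"
proof (intro equalityI subsetI)
  fix ts assume "ts \<in> incseqs 2 i j"
  then have "length ts = 2" "ts ! 0 = i" "ts ! 1 = j"
    by (auto simp: incseqs_def)
  then show "ts \<in> {[i, j]}"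
    by (cases ts; cases "tl ts") auto
qed (auto simp: incseqs_def)

lemma incseqs_Suc:
  assumes "2 \<le> v"
  shows "incseqs (Suc v) i j = (\<lambda>ts. ts @ [j]) ` (\<Union>l\<in>{i<..<j}. incseqs v i l)"
proof (intro equalityI subsetI)
  fix ts assume "ts \<in> incseqs (Suc v) i j"
  then have len: "length ts = Suc v" and sorted: "sorted_wrt (<) ts"
    and first: "ts ! 0 = i" and last: "ts ! v = j"
    by (auto simp: incseqs_def)
  obtain ts' x where ts: "ts = ts' @ [x]"
    using len by (cases ts rule: rev_cases) auto
  have len': "length ts' = v" and x: "x = j"
    using len last by (auto simp: ts nth_append)
  have sorted': "sorted_wrt (<) ts'" and below: "\<forall>y\<in>set ts'. y < j"
    using sorted by (auto simp: ts x sorted_wrt_append)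
  have first': "ts' ! 0 = i"
    using first len' assms by (simp add: ts nth_append)
  define l where "l = ts' ! (v - 1)"
  have "ts' \<in> incseqs v i l"
    using len' sorted' first' by (simp add: incseqs_def l_def)
  moreover have "l \<in> {i<..<j}"
  proof -
    have "i < l"
      using sorted_wrt_nth_less[OF sorted', of 0 "v - 1"] len' assms first' by (simp add: l_def)
    moreover have "l < j"
      using below len' assms by (simp add: l_def)
    ultimately show ?thesis by simp
  qed
  ultimately show "ts \<in> (\<lambda>ts. ts @ [j]) ` (\<Union>l\<in>{i<..<j}. incseqs v i l)"
    using ts x by blast
next
  fix ts assume "ts \<in> (\<lambda>ts. ts @ [j]) ` (\<Union>l\<in>{i<..<j}. incseqs v i l)"
  then obtain ts' l where ts: "ts = ts' @ [j]" and l: "l \<in> {i<..<j}" and ts': "ts' \<in> incseqs v i l"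
    by blast
  have "\<forall>x\<in>set ts'. x < j"
    using incseqs_subset_atLeastAtMost[OF ts'] l by fastforce
  moreover have "length ts' = v" "sorted_wrt (<) ts'" "ts' ! 0 = i"
    using ts' by (auto simp: incseqs_def)
  ultimately show "ts \<in> incseqs (Suc v) i j"
    using assms by (simp add: ts incseqs_def sorted_wrt_append nth_append)
qed

definition path_weight :: "(nat \<Rightarrow> real^'n) \<Rightarrow> (nat \<Rightarrow> real) \<Rightarrow> nat list \<Rightarrow> real" where
  "path_weight a mu ts = (\<Prod>s<length ts - 1. mu (ts ! (s+1)) * hcoef a (ts ! s) (ts ! (s+1)))"

definition path_sum :: "(nat \<Rightarrow> real^'n) \<Rightarrow> (nat \<Rightarrow> real) \<Rightarrow> nat \<Rightarrow> nat \<Rightarrow> nat \<Rightarrow> real" where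
  "path_sum a mu v i j = (\<Sum>ts\<in>incseqs v i j. path_weight a mu ts)"

lemma path_weight_snoc:
  assumes "ts \<noteq> []"
  shows "path_weight a mu (ts @ [j]) = path_weight a mu ts * (mu j * hcoef a (last ts) j)"
proof -
  obtain n where n: "length ts = Suc n"
    using assms by (cases ts) auto
  let ?w = "\<lambda>xs s. mu (xs ! (s+1)) * hcoef a (xs ! s) (xs ! (s+1))"
  have "path_weight a mu (ts @ [j]) = (\<Prod>s<n. ?w (ts @ [j]) s) * (mu j * hcoef a (ts ! n) j)"
    using n by (simp add: path_weight_def nth_append)
  also have "(\<Prod>s<n. ?w (ts @ [j]) s) = path_weight a mu ts"
    using n by (auto simp: path_weight_def nth_append intro!: prod.cong)
  finally show ?thesis
    using n assms by (simp add: last_conv_nth)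
qed

lemma path_sum_eq_0: "j - i + 1 < v \<Longrightarrow> path_sum a mu v i j = 0"
  by (simp add: path_sum_def incseqs_eq_empty)

lemma path_sum_two: "i < j \<Longrightarrow> path_sum a mu 2 i j = mu j * hcoef a i j"
  by (simp add: path_sum_def path_weight_def incseqs_two)

lemma path_sum_Suc:
  assumes "2 \<le> v"
  shows "path_sum a mu (Suc v) i j = (\<Sum>l\<in>{i<..<j}. path_sum a mu v i l * (mu j * hcoef a l j))"
proof -
  have snoc_inj: "inj_on (\<lambda>ts. ts @ [j]) X" for X
    by (simp add: inj_on_def)
  have disjoint: "incseqs v i l \<inter> incseqs v i l' = {}" if "l \<noteq> l'" for l l'
    using that by (auto simp: incseqs_def)
  have "path_sum a mu (Suc v) i j = (\<Sum>ts\<in>(\<Union>l\<in>{i<..<j}. incseqs v i l). path_weight a mu (ts @ [j]))"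
    unfolding path_sum_def incseqs_Suc[OF assms] by (simp add: sum.reindex[OF snoc_inj])
  also have "\<dots> = (\<Sum>l\<in>{i<..<j}. \<Sum>ts\<in>incseqs v i l. path_weight a mu (ts @ [j]))"
    by (rule sum.UNION_disjoint) (auto simp: finite_incseqs disjoint)
  also have "\<dots> = (\<Sum>l\<in>{i<..<j}. \<Sum>ts\<in>incseqs v i l. path_weight a mu ts * (mu j * hcoef a l j))"
  proof (intro sum.cong refl)
    fix l ts assume "ts \<in> incseqs v i l"
    then have len: "2 \<le> length ts" and last: "ts ! (length ts - 1) = l"
      using assms by (auto simp: incseqs_def)
    from len have "ts \<noteq> []"
      by auto
    with last show "path_weight a mu (ts @ [j]) = path_weight a mu ts * (mu j * hcoef a l j)"
      by (simp add: path_weight_snoc last_conv_nth)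
  qed
  finally show ?thesis
    by (simp add: path_sum_def sum_distrib_right)
qed

lemma dcoef_eq_path_sum:
  assumes "j - i + 1 \<le> N"
  shows "dcoef a mu i j = (\<Sum>v = 2..N. (-1) ^ (v - 1) * path_sum a mu v i j)"
proof -
  have "dcoef a mu i j = (\<Sum>v = 2..j - i + 1. (-1) ^ (v - 1) * path_sum a mu v i j)"
    unfolding dcoef_def path_sum_def path_weight_def
    by (intro sum.cong refl arg_cong2[where f = "(*)"]) (auto simp: incseqs_def prod.distrib)
  also have "\<dots> = (\<Sum>v = 2..N. (-1) ^ (v - 1) * path_sum a mu v i j)"
    using assms by (intro sum.mono_neutral_left) (auto simp: path_sum_eq_0)
  finally show ?thesis .
qed

lemma dcoef_rec:
  assumes "i < j"
  shows "dcoef a mu i j = - mu j * (hcoef a i j + (\<Sum>l\<in>{i<..<j}. dcoef a mu i l * hcoef a l j))"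
proof -
  define N where "N = j - i"
  have "dcoef a mu i j = (\<Sum>v = 2..Suc N. (-1) ^ (v - 1) * path_sum a mu v i j)"
    by (rule dcoef_eq_path_sum) (simp add: N_def)
  also have "\<dots> = - path_sum a mu 2 i j + (\<Sum>v = 2..N. (-1) ^ v * path_sum a mu (Suc v) i j)"
    using assms by (subst sum.atLeast_Suc_atMost) (simp_all only: sum.shift_bounds_cl_Suc_ivl, simp_all add: N_def)
  also have "(\<Sum>v = 2..N. (-1) ^ v * path_sum a mu (Suc v) i j)
      = (\<Sum>l\<in>{i<..<j}. mu j * hcoef a l j * (\<Sum>v = 2..N. (-1) ^ v * path_sum a mu v i l))"
    by (simp add: path_sum_Suc sum_distrib_left sum_distrib_right mult_ac sum.swap[where A = "{2..N}"])
  also have "\<dots> = (\<Sum>l\<in>{i<..<j}. mu j * hcoef a l j * - dcoef a mu i l)"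
  proof (intro sum.cong refl arg_cong2[where f = "(*)"])
    fix l assume "l \<in> {i<..<j}"
    then have "dcoef a mu i l = (\<Sum>v = 2..N. (-1) ^ (v - 1) * path_sum a mu v i l)"
      by (intro dcoef_eq_path_sum) (auto simp: N_def)
    moreover have "(-1::real) ^ v = - ((-1) ^ (v - 1))" if "2 \<le> v" for v
      using that by (cases v) auto
    ultimately show "(\<Sum>v = 2..N. (-1) ^ v * path_sum a mu v i l) = - dcoef a mu i l"
      by (simp add: sum_negf[symmetric])
  qed
  finally show ?thesis
    using assms by (simp add: path_sum_two sum_distrib_left algebra_simps sum_negf)
qed

lemma Qmat_mult_row:
  "i \<le> m \<Longrightarrow> Qmat a mu m i *v a i = a i + (\<Sum>j = i+1..m. dcoef a mu i j *\<^sub>R a j)"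
proof (induction m)
  case 0
  then show ?case by simp
next
  case (Suc m)
  show ?case
  proof (cases "i = Suc m")
    case True
    then show ?thesis by simp
  next
    case False
    then have "i \<le> m" "i < Suc m"
      using Suc.prems by simp_all
    define w where "w = a i + (\<Sum>j = i+1..m. dcoef a mu i j *\<^sub>R a j)"
    have "Qmat a mu (Suc m) i *v a i = Pmat a mu (Suc m) *v w"
      using Suc.IH \<open>i \<le> m\<close> by (simp add: Qmat_Suc w_def flip: matrix_vector_mul_assoc)
    also have "\<dots> = w - (mu (Suc m) * ((a (Suc m) \<bullet> w) / (norm (a (Suc m)))\<^sup>2)) *\<^sub>R a (Suc m)"
      by (simp add: Pmat_mult_vector)
    also have "(a (Suc m) \<bullet> w) / (norm (a (Suc m)))\<^sup>2
        = hcoef a i (Suc m) + (\<Sum>l\<in>{i<..<Suc m}. dcoef a mu i l * hcoef a l (Suc m))"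
    proof -
      have "{i<..<Suc m} = {i+1..m}" by auto
      then show ?thesis
        by (simp add: w_def hcoef_def inner_add_right inner_sum_right add_divide_distrib
            sum_divide_distrib inner_commute)
    qed
    also have "w - (mu (Suc m) * \<dots>) *\<^sub>R a (Suc m) = w + dcoef a mu i (Suc m) *\<^sub>R a (Suc m)"
      unfolding dcoef_rec[OF \<open>i < Suc m\<close>] by simp
    finally show ?thesis
      using \<open>i \<le> m\<close> by (simp add: w_def add.assoc)
  qed
qed

theorem lemma3p7:
  fixes a :: "nat \<Rightarrow> real^'n" and mu :: "nat \<Rightarrow> real" and m :: nat
  assumes nozero: "\<forall>k\<in>{1..m}. a k \<noteq> 0"
  shows "\<forall>i\<in>{1..m}.
     (\<forall>x\<in>orth_compl (nullspace_rows a m).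
        a i \<bullet> (transpose (Qmat a mu m i) *v x)
          = a i \<bullet> x + (\<Sum>j = i+1..m. dcoef a mu i j * (a j \<bullet> x)))
     \<and> Qmat a mu m i *v a i = a i + (\<Sum>j = i+1..m. dcoef a mu i j *\<^sub>R a j)"
proof -
  have row: "Qmat a mu m i *v a i = a i + (\<Sum>j = i+1..m. dcoef a mu i j *\<^sub>R a j)"
    if "i \<in> {1..m}" for i
    using that by (simp add: Qmat_mult_row)
  have "a i \<bullet> (transpose (Qmat a mu m i) *v x) = a i \<bullet> x + (\<Sum>j = i+1..m. dcoef a mu i j * (a j \<bullet> x))"
    if "i \<in> {1..m}" for i x
    unfolding inner_transpose_mult row[OF that] by (simp add: inner_add_left inner_sum_left)
  with row show ?thesis
    by blast
qed

end
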